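(* For all $N\in\mathbb Z_{\ge1}$, $m\in\mathbb Z$ and primitive $k$th roots of unity $\xi$, $$A_m(\xi,N)=\frac{(-1)^N\xi^{-m}}{N!}\sum_{u+v+j_1+\dots+j_N=N+m}B_v^{(m+1)}\beta_{j_1}(\xi)\beta_{j_2}(\xi^2)\cdots\beta_{j_N}(\xi^N)\frac{1^{j_1}2^{j_2}\cdots N^{j_N}}{u!\,v!\,j_1!\cdots j_N!},$$ the sum over all $u,v,j_1,\dots,j_N\in\mathbb Z_{\ge0}$ (an empty sum being $0$).
   Context: $(q)_N:=(1-q)\cdots(1-q^N)$ and $A_m(\xi,N)$ is the coefficient of $(q-\xi)^m$ in the Laurent expansion of $1/(q)_N$ about $q=\xi$. Nörlund polynomials: $(z/(e^z-1))^\alpha=\sum_n B_n^{(\alpha)}z^n/n!$. Apostol–Bernoulli numbers: $\frac{z}{\rho e^z-1}=\sum_{n\ge0}\beta_n(\rho)z^n/n!$ for $\rho\in\mathbb C$. *)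

theory Defs
  imports "HOL-Complex_Analysis.Complex_Analysis"
begin

definition qpoch :: "complex \<Rightarrow> nat \<Rightarrow> complex" where
  "qpoch q N = (\<Prod>i = 1..N. 1 - q ^ i)"

definition A_coeff :: "int \<Rightarrow> complex \<Rightarrow> nat \<Rightarrow> complex" where
  "A_coeff m \<xi> N = fls_nth (laurent_expansion (\<lambda>q. 1 / qpoch q N) \<xi>) m"

definition norlund :: "nat \<Rightarrow> int \<Rightarrow> complex" where
  "norlund n \<alpha> = fact n *
     fls_nth ((fls_X / fps_to_fls (fps_exp 1 - 1)) powi \<alpha>) (int n)"

definition apostol_bernoulli :: "complex \<Rightarrow> nat \<Rightarrow> complex" where
  "apostol_bernoulli \<rho> n = fact n *
     fls_nth (fls_X / fps_to_fls (fps_const \<rho> * fps_exp 1 - 1)) (int n)"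

definition primitive_root_of_unity :: "nat \<Rightarrow> complex \<Rightarrow> bool" where
  "primitive_root_of_unity k \<xi> \<longleftrightarrow> k \<ge> 1 \<and> \<xi> ^ k = 1 \<and> (\<forall>j\<in>{1..<k}. \<xi> ^ j \<noteq> 1)"

end

theory Submission
  imports Defs
begin

text \<open>Put \<open>q = \<xi> + x\<close>, so that \<open>A\<^sub>m(\<xi>, N)\<close> is the residue of
  \<open>x\<^bsup>-m-1\<^esup> / \<Prod>\<^sub>i (1 - (\<xi> + x)\<^sup>i)\<close>. Formal residues are invariant under the
  substitution \<open>x = \<xi> (e\<^sup>z - 1)\<close>, after which \<open>1 - q\<^sup>i = - i z / (i z / (\<xi>\<^sup>i e\<^bsup>i z\<^esup> - 1))\<close>
  and \<open>x\<^bsup>-m-1\<^esup> dx = \<xi>\<^bsup>-m\<^esup> e\<^sup>z (z / (e\<^sup>z - 1))\<^bsup>m+1\<^esup> z\<^bsup>-m-1\<^esup> dz\<close>. So \<open>A\<^sub>m(\<xi>, N)\<close> is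
  \<open>(-1)\<^sup>N \<xi>\<^bsup>-m\<^esup> / N!\<close> times the coefficient of \<open>z\<^bsup>N+m\<^esup>\<close> in
  \<open>e\<^sup>z (z / (e\<^sup>z - 1))\<^bsup>m+1\<^esup> \<Prod>\<^sub>i i z / (\<xi>\<^sup>i e\<^bsup>i z\<^esup> - 1)\<close>, and expanding this product
  of power series gives the sum.\<close>

unbundle no vec_syntax

lemma fls_deriv_power_int:
  fixes F :: "'a::field_char_0 fls"
  shows "fls_deriv (F powi n) = of_int n * F powi (n - 1) * fls_deriv F"
proof (cases "n \<ge> 0")
  case True
  then obtain k where k: "n = int k" by (metis nonneg_eq_int)
  show ?thesis
  proof (cases k)
    case 0 thus ?thesis using k by simp
  next
    case (Suc j)
    have "n - 1 = int j" using k Suc by simp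
    hence powers: "F powi n = F ^ k" "F powi (n - 1) = F ^ j" using k by (metis power_int_of_nat)+
    show ?thesis unfolding powers fls_deriv_power using k Suc by simp
  qed
next
  case False
  define k where "k = nat (-n)"
  have k: "n = - int k" "k > 0" using False by (auto simp: k_def)
  show ?thesis
  proof (cases "F = 0")
    case True thus ?thesis using k by (simp add: power_int_def zero_power)
  next
    case F: False
    have pos: "F powi n = inverse (F ^ k)" using k by (simp add: power_int_def power_inverse)
    have pred: "F powi (n - 1) = inverse (F ^ Suc k)" using k
      by (simp add: power_int_def nat_add_distrib power_inverse)
    have "fls_deriv (F powi n) = - inverse (F ^ k) * (of_nat k * F ^ (k - 1) * fls_deriv F) * inverse (F ^ k)"
      unfolding pos fls_inverse_deriv_divring fls_deriv_power ..
    also have "\<dots> = of_int n * inverse (F ^ Suc k) * fls_deriv F"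
      using F k(2) unfolding k(1) by (cases k) (simp_all add: field_simps)
    finally show ?thesis by (simp add: pred)
  qed
qed

lemma fps_to_fls_prod: "fps_to_fls (\<Prod>i\<in>I. F i) = (\<Prod>i\<in>I. fps_to_fls (F i))"
  by (induction I rule: infinite_finite_induct) (auto simp: fls_times_fps_to_fls)

lemma fls_const_prod: "fls_const (\<Prod>i\<in>I. f i) = (\<Prod>i\<in>I. fls_const (f i))"
  by (induction I rule: infinite_finite_induct) (auto simp flip: fls_const_mult_const)

lemma fls_compose_fps_prod:
  assumes "H \<noteq> 0" "fps_nth H 0 = 0"
  shows "fls_compose_fps (\<Prod>i\<in>I. F i) H = (\<Prod>i\<in>I. fls_compose_fps (F i) H)"
  by (induction I rule: infinite_finite_induct) (auto simp: fls_compose_fps_mult assms)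

lemma fls_compose_fps_X_intpow:
  assumes "H \<noteq> 0" "fps_nth H 0 = 0"
  shows "fls_compose_fps (fls_X_intpow n) H = fps_to_fls H powi n"
  using fls_compose_fps_powi[OF assms, of fls_X n] by simp

lemma fls_deriv_fls_compose_fps:
  fixes H :: "'a::field_char_0 fps"
  assumes H: "H \<noteq> 0" "fps_nth H 0 = 0"
  shows "fls_deriv (fls_compose_fps F H) = fls_compose_fps (fls_deriv F) H * fps_to_fls (fps_deriv H)"
proof -
  define B where "B = fls_base_factor_to_fps F"
  define n where "n = fls_subdegree F"
  have F: "F = fps_to_fls B * fls_X_intpow n"
    unfolding B_def n_def
    by (metis fls_conv_base_factor_to_fps_shift_subdegree fls_X_intpow_times_conv_shift(2))
  have dF: "fls_deriv F = fps_to_fls (fps_deriv B) * fls_X_intpow n + fps_to_fls B * (of_int n * fls_X_intpow (n - 1))"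
    unfolding F by (simp add: fls_deriv_X_intpow fls_deriv_fps_to_fls)
  have "fls_compose_fps F H = fps_to_fls (B oo H) * fps_to_fls H powi n"
    unfolding F using H by (simp add: fls_compose_fps_mult fls_compose_fps_X_intpow)
  hence "fls_deriv (fls_compose_fps F H) =
     fps_to_fls (B oo H) * (of_int n * fps_to_fls H powi (n - 1) * fps_to_fls (fps_deriv H)) +
     fps_to_fls ((fps_deriv B oo H) * fps_deriv H) * fps_to_fls H powi n"
    using H by (simp add: fls_deriv_power_int fls_deriv_fps_to_fls fps_compose_deriv)
  also have "\<dots> = fls_compose_fps (fls_deriv F) H * fps_to_fls (fps_deriv H)"
    using fls_compose_fps_X_intpow[OF H, of "n - 1"] fls_compose_fps_X_intpow[OF H, of n]
    unfolding dF using H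
    by (simp add: fls_compose_fps_mult fls_compose_fps_add fls_compose_fps_X_intpow
         fls_times_fps_to_fls algebra_simps)
  finally show ?thesis .
qed

text \<open>Substitution invariance of the residue: write \<open>F = K' + c/X\<close>; the derivative part stays
  a derivative after substitution, and \<open>1/X\<close> becomes \<open>H'/H\<close>, whose residue is the subdegree 1
  of \<open>H\<close>.\<close>
lemma fls_residue_fls_compose_fps:
  fixes H :: "'a::field_char_0 fps"
  assumes H: "fps_nth H 0 = 0" "fps_nth H 1 \<noteq> 0"
  shows "fls_residue (fls_compose_fps F H * fps_to_fls (fps_deriv H)) = fls_residue F"
proof -
  have H0: "H \<noteq> 0" using H by auto
  define c where "c = fls_residue F"
  have "fls_residue (F - fls_const c * fls_X_intpow (-1)) = 0"
    unfolding c_def by (simp add: fls_residue_fls_const_times)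
  then obtain K where "fls_deriv K = F - fls_const c * fls_X_intpow (-1)"
    using fls_residue_nonzero_ex_antiderivative by blast
  hence F: "F = fls_deriv K + fls_const c * fls_X_intpow (-1)" by simp
  have "subdegree H = 1" by (rule subdegreeI) (use H in \<open>auto simp: less_Suc_eq\<close>)
  hence "fls_subdegree (fps_to_fls H) = 1"
    by (simp add: fls_subdegree_fls_to_fps)
  hence residue_log_deriv: "fls_residue (fls_deriv (fps_to_fls H) * inverse (fps_to_fls H)) = 1"
    using fls_residue_deriv_times_inverse_eq_subdegree(1)[of "fps_to_fls H"] by simp
  have "fls_compose_fps F H * fps_to_fls (fps_deriv H) =
    fls_deriv (fls_compose_fps K H) + fls_const c * (fls_deriv (fps_to_fls H) * inverse (fps_to_fls H))"
    unfolding F using H H0 fls_compose_fps_X_intpow[OF H0 H(1), of "-1"]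
    by (simp add: fls_compose_fps_add fls_compose_fps_mult fls_compose_fps_X_intpow
        fls_deriv_fls_compose_fps fls_deriv_fps_to_fls power_int_minus algebra_simps)
  also have "fls_residue \<dots> = c"
    using residue_log_deriv by (simp add: fls_residue_fls_const_times)
  finally show ?thesis unfolding c_def .
qed

lemma fps_prod_nth_PiE:
  fixes F :: "'i \<Rightarrow> 'a::comm_ring_1 fps"
  assumes "finite I"
  shows "(\<Prod>i\<in>I. F i) $ n = (\<Sum>j \<in> {j \<in> I \<rightarrow>\<^sub>E {..n}. sum j I = n}. \<Prod>i\<in>I. F i $ j i)"
  using assms
proof (induction I arbitrary: n rule: finite_induct)
  case empty
  have "{j \<in> {} \<rightarrow>\<^sub>E {..n}. sum j {} = n} = (if n = 0 then {\<lambda>_. undefined} else {})"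
    by auto
  thus ?case by simp
next
  case (insert a A n)
  have fin: "finite {j \<in> A \<rightarrow>\<^sub>E {..k}. P j}" for k :: nat and P
    by (rule finite_subset[OF _ finite_PiE[of A "\<lambda>_. {..k}"]]) (use insert.hyps in auto)
  define S where "S = (SIGMA k:{0..n}. {j \<in> A \<rightarrow>\<^sub>E {..n - k}. sum j A = n - k})"
  have "(\<Prod>i\<in>insert a A. F i) $ n = (\<Sum>k=0..n. F a $ k * (\<Prod>i\<in>A. F i) $ (n - k))"
    using insert by (simp add: fps_mult_nth)
  also have "\<dots> = (\<Sum>(k, j)\<in>S. F a $ k * (\<Prod>i\<in>A. F i $ j i))"
    unfolding S_def insert.IH sum_distrib_left by (rule sum.Sigma) (auto intro: fin)
  also have "\<dots> = (\<Sum>j \<in> {j \<in> insert a A \<rightarrow>\<^sub>E {..n}. sum j (insert a A) = n}. \<Prod>i\<in>insert a A. F i $ j i)"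
  proof (rule sum.reindex_bij_witness[where j = "\<lambda>(k, j). j(a := k)" and i = "\<lambda>g. (g a, g(a := undefined))"])
    fix g assume g: "g \<in> {j \<in> insert a A \<rightarrow>\<^sub>E {..n}. sum j (insert a A) = n}"
    have sum_g: "sum g (insert a A) = g a + sum g A" using insert by simp
    have "sum (g(a := undefined)) A = sum g A"
      using insert.hyps by (intro sum.cong) auto
    moreover have "g i \<le> n - g a" if "i \<in> A" for i
      using member_le_sum[of i A g] that g sum_g insert.hyps by auto
    ultimately show "(g a, g(a := undefined)) \<in> S"
      using g sum_g insert.hyps unfolding S_def by (auto simp: PiE_iff)
    show "(case (g a, g(a := undefined)) of (k, j) \<Rightarrow> j(a := k)) = g" by auto
  next
    fix p assume p: "p \<in> S"
    then obtain k j where kj: "p = (k, j)" "k \<le> n" "j \<in> A \<rightarrow>\<^sub>E {..n - k}" "sum j A = n - k"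
      unfolding S_def by auto
    have "j a = undefined" using kj(3) insert.hyps(2) by (auto simp: PiE_iff extensional_def)
    thus "(case (case p of (k, j) \<Rightarrow> j(a := k)) of g \<Rightarrow> (g a, g(a := undefined))) = p"
      using kj by auto
    have "sum (j(a := k)) A = sum j A"
      using insert.hyps by (intro sum.cong) auto
    thus "(case p of (k, j) \<Rightarrow> j(a := k)) \<in> {j \<in> insert a A \<rightarrow>\<^sub>E {..n}. sum j (insert a A) = n}"
      using kj insert.hyps by (auto simp: PiE_iff)
    have "(\<Prod>i\<in>A. F i $ (j(a := k)) i) = (\<Prod>i\<in>A. F i $ j i)"
      using insert.hyps by (intro prod.cong) auto
    thus "(\<Prod>i\<in>insert a A. F i $ (case p of (k, j) \<Rightarrow> j(a := k)) i) =
          (case p of (k, j) \<Rightarrow> F a $ k * (\<Prod>i\<in>A. F i $ j i))"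
      using kj insert.hyps by simp
  qed
  finally show ?case .
qed

lemma PiE_atMost_sum_eq:
  fixes k n :: nat
  assumes "k \<le> n" "finite I"
  shows "{j \<in> I \<rightarrow>\<^sub>E {..n}. sum j I = k} = {j \<in> I \<rightarrow>\<^sub>E {..k}. sum j I = k}"
proof (intro equalityI subsetI)
  fix j assume j: "j \<in> {j \<in> I \<rightarrow>\<^sub>E {..n}. sum j I = k}"
  have "j i \<le> k" if "i \<in> I" for i
    using member_le_sum[of i I j] that j assms by auto
  thus "j \<in> {j \<in> I \<rightarrow>\<^sub>E {..k}. sum j I = k}" using j by (auto simp: PiE_iff)
qed (use assms in \<open>auto simp: PiE_iff\<close>)

lemma fps_mult_mult_prod_nth:
  fixes f g :: "'a::comm_ring_1 fps" and h :: "'i \<Rightarrow> 'a fps"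
  assumes I: "finite I"
  shows "(f * g * (\<Prod>i\<in>I. h i)) $ n =
    (\<Sum>(u, v, j) \<in> {(u, v, j). u \<le> n \<and> v \<le> n \<and> j \<in> I \<rightarrow>\<^sub>E {..n} \<and> u + v + sum j I = n}.
       f $ u * g $ v * (\<Prod>i\<in>I. h i $ j i))"
proof -
  define S where "S = (\<lambda>k. {j \<in> I \<rightarrow>\<^sub>E {..n}. sum j I = k})"
  have fin: "finite (S k)" for k
    unfolding S_def by (rule finite_subset[OF _ finite_PiE[of I "\<lambda>_. {..n}"]]) (use I in auto)
  have "(f * g * (\<Prod>i\<in>I. h i)) $ n = (\<Sum>u\<in>{..n}. \<Sum>v\<in>{..n - u}. \<Sum>j\<in>S (n - u - v).
      f $ u * g $ v * (\<Prod>i\<in>I. h i $ j i))"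
    unfolding mult.assoc fps_mult_nth atLeast0AtMost sum_distrib_left S_def
    by (intro sum.cong refl, subst PiE_atMost_sum_eq)
       (use I in \<open>auto simp: fps_prod_nth_PiE sum_distrib_left mult.assoc\<close>)
  also have "\<dots> = (\<Sum>(u, v, j) \<in> (SIGMA u:{..n}. SIGMA v:{..n - u}. S (n - u - v)).
      f $ u * g $ v * (\<Prod>i\<in>I. h i $ j i))"
    by (subst sum.Sigma, simp, simp add: fin, subst sum.Sigma) (simp_all add: fin)
  also have "(SIGMA u:{..n}. SIGMA v:{..n - u}. S (n - u - v)) =
      {(u, v, j). u \<le> n \<and> v \<le> n \<and> j \<in> I \<rightarrow>\<^sub>E {..n} \<and> u + v + sum j I = n}"
    unfolding S_def by auto
  finally show ?thesis .
qed

lemma laurent_expansion_inverse_qpoch: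
  "laurent_expansion (\<lambda>q. 1 / qpoch q N) \<xi> = inverse (\<Prod>i = 1..N. 1 - (fls_const \<xi> + fls_X) ^ i)"
proof (rule laurent_expansion_eqI)
  have "(\<lambda>x. inverse (\<Prod>i = 1..N. 1 - (\<xi> + x) ^ i)) has_laurent_expansion
          inverse (\<Prod>i = 1..N. 1 - (fls_const \<xi> + fls_X) ^ i)"
    by (intro laurent_expansion_intros)
  thus "(\<lambda>x. 1 / qpoch (\<xi> + x) N) has_laurent_expansion
          inverse (\<Prod>i = 1..N. 1 - (fls_const \<xi> + fls_X) ^ i)"
    by (simp add: qpoch_def divide_inverse)
qed

definition apostol_bernoulli_gf :: "complex \<Rightarrow> complex fls" where
  "apostol_bernoulli_gf \<rho> = fls_X / fps_to_fls (fps_const \<rho> * fps_exp 1 - 1)"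

lemma apostol_bernoulli_conv_gf: "apostol_bernoulli \<rho> n = fact n * fls_nth (apostol_bernoulli_gf \<rho>) (int n)"
  by (simp add: apostol_bernoulli_def apostol_bernoulli_gf_def)

lemma norlund_conv_gf: "norlund n \<alpha> = fact n * fls_nth (apostol_bernoulli_gf 1 powi \<alpha>) (int n)"
  by (simp add: norlund_def apostol_bernoulli_gf_def)

lemma fps_to_fls_const_times_exp_minus_one:
  fixes \<rho> c :: complex
  assumes "\<rho> \<noteq> 0" "c \<noteq> 0"
  shows "fps_to_fls (fps_const \<rho> * fps_exp c - 1) \<noteq> 0"
    and "fls_subdegree (fps_to_fls (fps_const \<rho> * fps_exp c - 1)) \<le> 1"
proof -
  have nth1: "(fps_const \<rho> * fps_exp c - 1) $ 1 \<noteq> 0"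
    using assms by simp
  hence "fps_const \<rho> * fps_exp c - 1 \<noteq> 0" by (metis fps_zero_nth)
  thus "fps_to_fls (fps_const \<rho> * fps_exp c - 1) \<noteq> 0"
    using fps_to_fls_eq_0_iff by blast
  show "fls_subdegree (fps_to_fls (fps_const \<rho> * fps_exp c - 1)) \<le> 1"
    using nth1 by (intro fls_subdegree_leI) simp
qed

lemma fls_compose_apostol_bernoulli_gf_linear:
  fixes c :: complex
  assumes "c \<noteq> 0"
  shows "fls_compose_fps (apostol_bernoulli_gf \<rho>) (fps_const c * fps_X) =
         fls_const c * fls_X / fps_to_fls (fps_const \<rho> * fps_exp c - 1)"
proof -
  define H :: "complex fps" where "H = fps_const c * fps_X"
  have H: "H \<noteq> 0" "fps_nth H 0 = 0" using assms by (auto simp: H_def fps_eq_iff)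
  have "(fps_const \<rho> * fps_exp 1 - 1) oo H = fps_const \<rho> * fps_exp c - 1"
    unfolding H_def by (simp add: fps_compose_sub_distrib fps_const_mult_apply_left[symmetric])
  moreover have "fps_to_fls H = fls_const c * fls_X"
    by (simp add: H_def fls_times_fps_to_fls)
  ultimately show ?thesis
    unfolding apostol_bernoulli_gf_def H_def[symmetric]
    by (simp only: fls_compose_fps_divide[OF H] fls_compose_fps_X fls_compose_fps_to_fls[OF H])
qed

lemma fls_compose_apostol_bernoulli_gf_linear_nth:
  fixes c :: complex
  assumes "c \<noteq> 0"
  shows "fls_nth (fls_compose_fps (apostol_bernoulli_gf \<rho>) (fps_const c * fps_X)) (int j) =
         apostol_bernoulli \<rho> j / fact j * c ^ j"
  using assms by (simp add: fls_nth_fls_compose_fps_linear apostol_bernoulli_conv_gf)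

lemma apostol_bernoulli_gf_subdegree_nonneg:
  assumes "\<rho> \<noteq> 0"
  shows "fls_subdegree (apostol_bernoulli_gf \<rho>) \<ge> 0"
  unfolding apostol_bernoulli_gf_def
  using fps_to_fls_const_times_exp_minus_one[OF assms one_neq_zero]
  by (subst fls_divide_subdegree) auto

lemma apostol_bernoulli_gf_1_subdegree: "fls_subdegree (apostol_bernoulli_gf 1) = 0"
proof -
  have "subdegree (fps_exp (1::complex) - 1) = 1"
    by (rule subdegreeI) (auto simp: less_Suc_eq)
  hence "fls_subdegree (fps_to_fls (fps_exp (1::complex) - 1)) = 1"
    by (metis fls_subdegree_fls_to_fps of_nat_1)
  thus ?thesis
    unfolding apostol_bernoulli_gf_def
    using fps_to_fls_const_times_exp_minus_one(1)[of 1 1]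
    by (subst fls_divide_subdegree) auto
qed

lemma fls_compose_fps_linear_subdegree_nonneg:
  fixes F :: "'a::field fls"
  assumes "fls_subdegree F \<ge> 0" "c \<noteq> 0"
  shows "fls_subdegree (fls_compose_fps F (fps_const c * fps_X)) \<ge> 0"
  using assms by (intro fls_subdegree_ge0I) (simp add: fls_nth_fls_compose_fps_linear)

lemma inverse_one_minus_exp_power:
  fixes \<xi> :: complex
  assumes "\<xi> \<noteq> 0" "i \<ge> 1"
  shows "inverse (1 - (fls_const \<xi> * fps_to_fls (fps_exp 1)) ^ i) =
    fls_const (- 1 / of_nat i) * fls_X_intpow (-1) *
    fls_compose_fps (apostol_bernoulli_gf (\<xi> ^ i)) (fps_const (of_nat i) * fps_X)"
proof -
  define Z where "Z = fps_to_fls (fps_const (\<xi> ^ i) * fps_exp (of_nat i) - 1)"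
  have Z: "Z \<noteq> 0"
    unfolding Z_def using assms by (intro fps_to_fls_const_times_exp_minus_one) auto
  have "fps_const (\<xi> ^ i) * fps_exp (of_nat i) = (fps_const \<xi> * fps_exp 1) ^ i"
    by (simp add: power_mult_distrib fps_exp_power_mult)
  hence denom: "1 - (fls_const \<xi> * fps_to_fls (fps_exp 1)) ^ i = - Z"
    by (simp add: Z_def fps_to_fls_power fls_times_fps_to_fls)
  have gf: "fls_compose_fps (apostol_bernoulli_gf (\<xi> ^ i)) (fps_const (of_nat i) * fps_X) =
      fls_const (of_nat i) * fls_X / Z"
    unfolding Z_def using assms(2) by (intro fls_compose_apostol_bernoulli_gf_linear) auto
  have X: "fls_X_intpow (-1) * fls_X = (1 :: complex fls)"
    using fls_X_intpow_times_fls_X_intpow[of "-1" 1] by (simp add: fls_X_conv_shift_1)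
  have c: "fls_const (- 1 / of_nat i) * fls_const (of_nat i) = (-1 :: complex fls)"
    using assms(2) by simp
  have "fls_const (- 1 / of_nat i) * fls_X_intpow (-1) * (fls_const (of_nat i) * fls_X / Z) =
      (fls_const (- 1 / of_nat i) * fls_const (of_nat i)) * (fls_X_intpow (-1) * fls_X) / Z"
    by (simp only: times_divide_eq_right ac_simps)
  thus ?thesis
    unfolding denom gf c X by (simp add: inverse_eq_divide)
qed

lemma inverse_prod_one_minus_exp_power:
  fixes \<xi> :: complex
  assumes "\<xi> \<noteq> 0"
  shows "inverse (\<Prod>i = 1..N. 1 - (fls_const \<xi> * fps_to_fls (fps_exp 1)) ^ i) =
    fls_const ((-1) ^ N / fact N) * fls_X_intpow (- int N) *
    (\<Prod>i = 1..N. fls_compose_fps (apostol_bernoulli_gf (\<xi> ^ i)) (fps_const (of_nat i) * fps_X))"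
proof -
  have "(\<Prod>i = 1..N. - 1 / of_nat i :: complex) = (\<Prod>i = 1..N. - 1) / (\<Prod>i = 1..N. of_nat i)"
    by (rule prod_dividef)
  hence scalars: "(\<Prod>i = 1..N. - 1 / of_nat i :: complex) = (-1) ^ N / fact N"
    by (simp add: fact_prod)
  have "inverse (\<Prod>i = 1..N. 1 - (fls_const \<xi> * fps_to_fls (fps_exp 1)) ^ i) =
      (\<Prod>i = 1..N. fls_const (- 1 / of_nat i) * fls_X_intpow (-1) *
         fls_compose_fps (apostol_bernoulli_gf (\<xi> ^ i)) (fps_const (of_nat i) * fps_X))"
    unfolding prod_inversef[symmetric] using assms
    by (intro prod.cong refl) (simp add: inverse_one_minus_exp_power)
  also have "\<dots> = fls_const (\<Prod>i = 1..N. - 1 / of_nat i) * fls_X_intpow (-1) ^ N *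
      (\<Prod>i = 1..N. fls_compose_fps (apostol_bernoulli_gf (\<xi> ^ i)) (fps_const (of_nat i) * fps_X))"
    by (simp only: prod.distrib fls_const_prod prod_constant card_atLeastAtMost) simp
  finally show ?thesis
    unfolding scalars fls_X_intpow_power by simp
qed

lemma power_int_exp_minus_one:
  fixes \<xi> :: complex
  shows "(fls_const \<xi> * (fps_to_fls (fps_exp 1) - 1)) powi n =
    fls_const (\<xi> powi n) * fls_X_intpow n * apostol_bernoulli_gf 1 powi (- n)"
proof -
  have "fps_to_fls (fps_exp 1) - 1 = fls_X * inverse (apostol_bernoulli_gf 1)"
    unfolding apostol_bernoulli_gf_def inverse_divide times_divide_eq_right
    by (simp only: nonzero_mult_div_cancel_left[OF fls_X_nonzero] fps_const_1_eq_1 mult_1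
        fps_to_fls_minus fps_one_to_fls)
  thus ?thesis
    by (simp add: power_int_mult_distrib power_int_minus power_int_inverse fls_const_power_int)
qed

definition A_series :: "complex \<Rightarrow> int \<Rightarrow> nat \<Rightarrow> complex fls" where
  "A_series \<xi> m N = fps_to_fls (fps_exp 1) * apostol_bernoulli_gf 1 powi (m + 1) *
     (\<Prod>i = 1..N. fls_compose_fps (apostol_bernoulli_gf (\<xi> ^ i)) (fps_const (of_nat i) * fps_X))"

lemma fls_compose_qpoch_integrand_exp:
  fixes \<xi> :: complex
  assumes "\<xi> \<noteq> 0"
  defines "W \<equiv> fps_const \<xi> * (fps_exp 1 - 1)"
  shows "fls_compose_fps (fls_X_intpow (-m-1) * inverse (\<Prod>i = 1..N. 1 - (fls_const \<xi> + fls_X) ^ i)) W *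
      fps_to_fls (fps_deriv W) =
    fls_const (\<xi> powi (-m) * (-1) ^ N / fact N) * (fls_X_intpow (- (int N + m) - 1) * A_series \<xi> m N)"
proof -
  define E where "E = fps_to_fls (fps_exp (1::complex))"
  define P where "P = (\<Prod>i = 1..N. fls_compose_fps (apostol_bernoulli_gf (\<xi> ^ i)) (fps_const (of_nat i) * fps_X))"
  have W: "W \<noteq> 0" "fps_nth W 0 = 0"
    using assms by (auto simp: W_def)
  have W_fls: "fps_to_fls W = fls_const \<xi> * (E - 1)"
    by (simp add: W_def E_def fls_times_fps_to_fls)
  have "fls_compose_fps (fls_X_intpow (-m-1) * inverse (\<Prod>i = 1..N. 1 - (fls_const \<xi> + fls_X) ^ i)) W =
      fps_to_fls W powi (-m-1) * inverse (\<Prod>i = 1..N. 1 - (fls_const \<xi> + fps_to_fls W) ^ i)"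
    unfolding fls_compose_fps_mult[OF W] fls_compose_fps_X_intpow[OF W]
      fls_compose_fps_inverse[OF W] fls_compose_fps_prod[OF W]
      fls_compose_fps_diff[OF W] fls_compose_fps_power[OF W]
      fls_compose_fps_add[OF W] fls_compose_fps_1 fls_compose_fps_const fls_compose_fps_X
    by (rule refl)
  also have "fls_const \<xi> + fps_to_fls W = fls_const \<xi> * E"
    unfolding W_fls by (simp add: algebra_simps)
  also have "fps_to_fls W powi (-m-1) * inverse (\<Prod>i = 1..N. 1 - (fls_const \<xi> * E) ^ i) =
      fls_const (\<xi> powi (-m-1)) * fls_X_intpow (-m-1) * apostol_bernoulli_gf 1 powi (m + 1) *
      (fls_const ((-1) ^ N / fact N) * fls_X_intpow (- int N) * P)"
    unfolding W_fls E_def P_def power_int_exp_minus_one inverse_prod_one_minus_exp_power[OF assms(1)]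
    by (simp add: add.commute)
  finally have "fls_compose_fps (fls_X_intpow (-m-1) * inverse (\<Prod>i = 1..N. 1 - (fls_const \<xi> + fls_X) ^ i)) W *
      fps_to_fls (fps_deriv W) =
    fls_const (\<xi> powi (-m-1)) * fls_X_intpow (-m-1) * apostol_bernoulli_gf 1 powi (m + 1) *
      (fls_const ((-1) ^ N / fact N) * fls_X_intpow (- int N) * P) * (fls_const \<xi> * E)"
    by (simp add: W_def E_def fls_times_fps_to_fls)
  also have "\<dots> = (fls_const (\<xi> powi (-m-1)) * fls_const ((-1) ^ N / fact N) * fls_const \<xi>) *
      (fls_X_intpow (-m-1) * fls_X_intpow (- int N)) * (E * apostol_bernoulli_gf 1 powi (m + 1) * P)"
    by (simp only: mult_ac)
  also have "fls_const (\<xi> powi (-m-1)) * fls_const ((-1) ^ N / fact N) * fls_const \<xi> =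
      fls_const (\<xi> powi (-m) * (-1) ^ N / fact N)"
    using power_int_add[of \<xi> "-m-1" 1] assms(1) by (simp add: mult_ac)
  also have "fls_X_intpow (-m-1) * fls_X_intpow (- int N) = (fls_X_intpow (- (int N + m) - 1) :: complex fls)"
    unfolding fls_X_intpow_times_fls_X_intpow by (rule arg_cong[where f = fls_X_intpow]) simp
  finally show ?thesis
    unfolding A_series_def E_def P_def by (simp only: mult.assoc)
qed

lemma A_coeff_eq_A_series_nth:
  assumes "\<xi> \<noteq> 0"
  shows "A_coeff m \<xi> N = \<xi> powi (-m) * (-1) ^ N / fact N * fls_nth (A_series \<xi> m N) (int N + m)"
proof -
  define W where "W = fps_const \<xi> * (fps_exp 1 - 1)"
  have W: "fps_nth W 0 = 0" "fps_nth W 1 \<noteq> 0"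
    using assms by (auto simp: W_def)
  have "A_coeff m \<xi> N = fls_nth (inverse (\<Prod>i = 1..N. 1 - (fls_const \<xi> + fls_X) ^ i)) m"
    by (simp add: A_coeff_def laurent_expansion_inverse_qpoch)
  also have "\<dots> = fls_residue (fls_X_intpow (-m-1) * inverse (\<Prod>i = 1..N. 1 - (fls_const \<xi> + fls_X) ^ i))"
    by (rule fls_residue_shift_nth)
  also have "\<dots> = fls_residue (fls_const (\<xi> powi (-m) * (-1) ^ N / fact N) *
      (fls_X_intpow (- (int N + m) - 1) * A_series \<xi> m N))"
    unfolding fls_compose_qpoch_integrand_exp[OF assms, folded W_def, symmetric]
    by (rule fls_residue_fls_compose_fps[OF W, symmetric])
  also have "\<dots> = \<xi> powi (-m) * (-1) ^ N / fact N * fls_nth (A_series \<xi> m N) (int N + m)"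
    by (simp only: fls_residue_fls_const_times fls_residue_shift_nth[symmetric])
  finally show ?thesis .
qed

lemma A_series_nth:
  assumes "\<xi> \<noteq> 0"
  shows "fls_nth (A_series \<xi> m N) (int N + m) =
    (\<Sum>(u, v, j) \<in> {(u, v, j). u \<le> nat (int N + m) \<and> v \<le> nat (int N + m) \<and>
          j \<in> ({1..N} \<rightarrow>\<^sub>E {..nat (int N + m)}) \<and>
          int (u + v + (\<Sum>i = 1..N. j i)) = int N + m}.
       norlund v (m + 1) * (\<Prod>i = 1..N. apostol_bernoulli (\<xi> ^ i) (j i)) *
       (\<Prod>i = 1..N. of_nat i ^ j i) /
       (fact u * fact v * (\<Prod>i = 1..N. fact (j i))))"
    (is "_ = (\<Sum>(u, v, j) \<in> ?S. ?f u v j)")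
proof -
  define B where "B = apostol_bernoulli_gf 1 powi (m + 1)"
  define D where "D = (\<lambda>i. fls_compose_fps (apostol_bernoulli_gf (\<xi> ^ i)) (fps_const (of_nat i) * fps_X))"
  have "fls_subdegree B \<ge> 0"
    by (simp add: B_def apostol_bernoulli_gf_1_subdegree)
  moreover have "fls_subdegree (D i) \<ge> 0" if "i \<in> {1..N}" for i
    unfolding D_def using that assms
    by (intro fls_compose_fps_linear_subdegree_nonneg apostol_bernoulli_gf_subdegree_nonneg) auto
  ultimately have series: "A_series \<xi> m N =
      fps_to_fls (fps_exp 1 * fls_regpart B * (\<Prod>i = 1..N. fls_regpart (D i)))"
    by (simp add: A_series_def B_def D_def fls_times_fps_to_fls fps_to_fls_prod)
  show ?thesis
  proof (cases "int N + m < 0")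
    case True
    hence "?S = {}" by auto
    thus ?thesis unfolding series using True by (simp only: sum.empty fps_to_fls_nth) simp
  next
    case False
    define n where "n = nat (int N + m)"
    have n: "int N + m = int n" using False by (simp add: n_def)
    have "?S = {(u, v, j). u \<le> n \<and> v \<le> n \<and> j \<in> {1..N} \<rightarrow>\<^sub>E {..n} \<and> u + v + sum j {1..N} = n}"
      unfolding n n_def[symmetric] by (auto simp del: of_nat_add of_nat_sum)
    moreover have "fps_exp 1 $ u * fls_regpart B $ v * (\<Prod>i = 1..N. fls_regpart (D i) $ j i) = ?f u v j"
      for u v j
    proof -
      have "(\<Prod>i = 1..N. fls_regpart (D i) $ j i) =
          (\<Prod>i = 1..N. apostol_bernoulli (\<xi> ^ i) (j i) / fact (j i) * of_nat i ^ j i)"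
        by (intro prod.cong refl) (simp add: D_def fls_compose_apostol_bernoulli_gf_linear_nth)
      thus ?thesis
        by (simp add: B_def norlund_conv_gf prod.distrib prod_dividef)
    qed
    ultimately show ?thesis
      unfolding series n by (simp add: fps_mult_mult_prod_nth)
  qed
qed

theorem proposition5p1:
  fixes N :: nat and m :: int and k :: nat and \<xi> :: complex
  assumes "N \<ge> 1" and "primitive_root_of_unity k \<xi>"
  shows "A_coeff m \<xi> N =
    ((-1) ^ N * \<xi> powi (-m) / fact N) *
    (\<Sum>(u, v, j) \<in> {(u, v, j). u \<le> nat (int N + m) \<and> v \<le> nat (int N + m) \<and>
          j \<in> ({1..N} \<rightarrow>\<^sub>E {..nat (int N + m)}) \<and>
          int (u + v + (\<Sum>i = 1..N. j i)) = int N + m}.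
       norlund v (m + 1) * (\<Prod>i = 1..N. apostol_bernoulli (\<xi> ^ i) (j i)) *
       (\<Prod>i = 1..N. of_nat i ^ j i) /
       (fact u * fact v * (\<Prod>i = 1..N. fact (j i))))"
proof -
  have "\<xi> \<noteq> 0"
    using assms(2) unfolding primitive_root_of_unity_def by (auto simp: zero_power)
  thus ?thesis
    by (simp add: A_coeff_eq_A_series_nth A_series_nth mult_ac)
qed

end
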